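(* Let $(X,d)$ be a separable geodesic Gromov-hyperbolic space with basepoint $o$, and $\mu$ a countably supported non-elementary probability measure on $\mathrm{Isom}(X)$ with finite exponential moment. Let $v(\mu)=\sup_{\xi\in\overline X^h}\mathbb E[(\sigma_0(X_1,\xi)-\ell_\mu)^2]$. For every $\epsilon>0$ there exists $b>0$ such that for every $|\lambda|<b$, every $n\in\mathbb N$ and every $x\in\overline X^h$, almost surely $$\mathbb E\big[\exp(\lambda\Delta_nM_x)\mid\mathcal F_{n-1}\big]\le\exp\Big(\frac{\lambda^2(v(\mu)+\epsilon)}{2}\Big).$$
   Context: Gromov-hyperbolic: $\exists\delta\ge0$, $(x|y)_o\ge\min\{(x|z)_o,(z|y)_o\}-\delta$ with $(x|y)_o=\frac12(d(x,o)+d(y,o)-d(x,y))$; non-elementary: the semigroup generated by $\mathrm{supp}\,\mu$ contains two loxodromic isometries with disjoint fixed point pairs on the Gromov boundary; $\kappa(g)=d(g\cdot o,o)$, finite exponential moment: $\int e^{\alpha\kappa}d\mu<\infty$ for some $\alpha>0$. $\overline X^h$ is the horofunction compactification (closure of $\{h_x:m\mapsto d(x,m)-d(x,o)\}$ among 1-Lipschitz functions vanishing at $o$, pointwise convergence), action $(g\cdot h)(m)=h(g^{-1}m)-h(g^{-1}o)$, Busemann cocycle $\sigma(g,h)=h(g^{-1}o)$. $X_i$ i.i.d. with law $\mu$, $L_n=X_n\cdots X_1$, $\mathcal F_n=\sigma(X_1,\dots,X_n)$, $\ell_\mu=\lim\kappa(L_n)/n$ a.s. $\sigma_0(g,x):=\sigma(g,x)+\psi(g\cdot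 x)-\psi(x)$ for a fixed bounded measurable $\psi$ (known to exist) with $\int\sigma_0(g,x)d\mu(g)=\ell_\mu$ for all $x$. $M_{x,n}=\sigma_0(L_n,x)-n\ell_\mu$ and $\Delta_nM_x=M_{x,n}-M_{x,n-1}=\sigma_0(X_n,L_{n-1}\cdot x)-\ell_\mu$. *)

theory Defs
  imports "HOL-Analysis.Analysis" "HOL-Probability.Probability"
begin

definition separable_space :: "'a::metric_space itself \<Rightarrow> bool" where
  "separable_space _ \<longleftrightarrow> (\<exists>D::'a set. countable D \<and> closure D = UNIV)"

definition geodesic_space :: "'a::metric_space itself \<Rightarrow> bool" where
  "geodesic_space _ \<longleftrightarrow> (\<forall>x y::'a. \<exists>\<gamma>::real \<Rightarrow> 'a.
      \<gamma> 0 = x \<and> \<gamma> (dist x y) = y \<and>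
      (\<forall>s\<in>{0..dist x y}. \<forall>t\<in>{0..dist x y}. dist (\<gamma> s) (\<gamma> t) = \<bar>s - t\<bar>))"

definition gprod :: "'a::metric_space \<Rightarrow> 'a \<Rightarrow> 'a \<Rightarrow> real" where
  "gprod o' x y = (dist x o' + dist y o' - dist x y) / 2"

definition gromov_hyperbolic :: "'a::metric_space \<Rightarrow> bool" where
  "gromov_hyperbolic o' \<longleftrightarrow> (\<exists>\<delta>\<ge>0. \<forall>x y z.
      gprod o' x y \<ge> min (gprod o' x z) (gprod o' z y) - \<delta>)"

definition isometry :: "('a::metric_space \<Rightarrow> 'a) \<Rightarrow> bool" where
  "isometry g \<longleftrightarrow> bij g \<and> (\<forall>x y. dist (g x) (g y) = dist x y)"

definition conv_infty :: "'a::metric_space \<Rightarrow> (nat \<Rightarrow> 'a) \<Rightarrow> bool" where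
  "conv_infty o' s \<longleftrightarrow> (\<forall>K. \<exists>N. \<forall>i\<ge>N. \<forall>j\<ge>N. gprod o' (s i) (s j) \<ge> K)"

definition bdry_equiv :: "'a::metric_space \<Rightarrow> (nat \<Rightarrow> 'a) \<Rightarrow> (nat \<Rightarrow> 'a) \<Rightarrow> bool" where
  "bdry_equiv o' s t \<longleftrightarrow> (\<forall>K. \<exists>N. \<forall>i\<ge>N. \<forall>j\<ge>N. gprod o' (s i) (t j) \<ge> K)"

definition bpt :: "'a::metric_space \<Rightarrow> (nat \<Rightarrow> 'a) \<Rightarrow> (nat \<Rightarrow> 'a) set" where
  "bpt o' s = {t. conv_infty o' t \<and> bdry_equiv o' s t}"

definition gromov_boundary :: "'a::metric_space \<Rightarrow> (nat \<Rightarrow> 'a) set set" where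
  "gromov_boundary o' = bpt o' ` {s. conv_infty o' s}"

definition loxodromic :: "'a::metric_space \<Rightarrow> ('a \<Rightarrow> 'a) \<Rightarrow> bool" where
  "loxodromic o' g \<longleftrightarrow> isometry g \<and>
     (\<exists>L>0. (\<lambda>n. dist ((g ^^ n) o') o' / real n) \<longlonglongrightarrow> L)"

definition fix_plus :: "'a::metric_space \<Rightarrow> ('a \<Rightarrow> 'a) \<Rightarrow> (nat \<Rightarrow> 'a) set" where
  "fix_plus o' g = bpt o' (\<lambda>n. (g ^^ n) o')"

definition fix_minus :: "'a::metric_space \<Rightarrow> ('a \<Rightarrow> 'a) \<Rightarrow> (nat \<Rightarrow> 'a) set" where
  "fix_minus o' g = bpt o' (\<lambda>n. (inv g ^^ n) o')"

inductive_set semigroup_gen :: "('a \<Rightarrow> 'a) set \<Rightarrow> ('a \<Rightarrow> 'a) set" for S where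
  base: "g \<in> S \<Longrightarrow> g \<in> semigroup_gen S"
| comp: "g \<in> semigroup_gen S \<Longrightarrow> h \<in> semigroup_gen S \<Longrightarrow> g \<circ> h \<in> semigroup_gen S"

definition non_elementary :: "'a::metric_space \<Rightarrow> ('a \<Rightarrow> 'a) pmf \<Rightarrow> bool" where
  "non_elementary o' \<mu> \<longleftrightarrow> (\<exists>g\<in>semigroup_gen (set_pmf \<mu>). \<exists>h\<in>semigroup_gen (set_pmf \<mu>).
      loxodromic o' g \<and> loxodromic o' h \<and>
      {fix_plus o' g, fix_minus o' g} \<inter> {fix_plus o' h, fix_minus o' h} = {})"

definition finite_exp_moment :: "'a::metric_space \<Rightarrow> ('a \<Rightarrow> 'a) pmf \<Rightarrow> bool" where
  "finite_exp_moment o' \<mu> \<longleftrightarrow>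
     (\<exists>\<alpha>>0. integrable (measure_pmf \<mu>) (\<lambda>g. exp (\<alpha> * dist (g o') o')))"

text \<open>Closure in the product (pointwise convergence) topology on 'a \<Rightarrow> real.\<close>
definition horo_cpt :: "'a::metric_space \<Rightarrow> ('a \<Rightarrow> real) set" where
  "horo_cpt o' = closure (range (\<lambda>x m. dist x m - dist x o'))"

definition horo_act :: "'a::metric_space \<Rightarrow> ('a \<Rightarrow> 'a) \<Rightarrow> ('a \<Rightarrow> real) \<Rightarrow> ('a \<Rightarrow> real)" where
  "horo_act o' g h = (\<lambda>m. h (inv g m) - h (inv g o'))"

definition busemann :: "'a::metric_space \<Rightarrow> ('a \<Rightarrow> 'a) \<Rightarrow> ('a \<Rightarrow> real) \<Rightarrow> real" where
  "busemann o' g h = h (inv g o')"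

definition sigma0 :: "'a::metric_space \<Rightarrow> (('a \<Rightarrow> real) \<Rightarrow> real) \<Rightarrow> ('a \<Rightarrow> 'a) \<Rightarrow> ('a \<Rightarrow> real) \<Rightarrow> real" where
  "sigma0 o' \<psi> g h = busemann o' g h + \<psi> (horo_act o' g h) - \<psi> h"

definition step_space :: "('a \<Rightarrow> 'a) pmf \<Rightarrow> ('a \<Rightarrow> 'a) measure" where
  "step_space \<mu> = restrict_space (measure_pmf \<mu>) (set_pmf \<mu>)"

text \<open>Sample space: sequences \<omega>, with X_n = \<omega> n for n \<ge> 1 (\<omega> 0 is unused).\<close>
definition walk_space :: "('a \<Rightarrow> 'a) pmf \<Rightarrow> (nat \<Rightarrow> 'a \<Rightarrow> 'a) measure" where
  "walk_space \<mu> = PiM UNIV (\<lambda>_. step_space \<mu>)"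

primrec walk :: "nat \<Rightarrow> (nat \<Rightarrow> 'a \<Rightarrow> 'a) \<Rightarrow> ('a \<Rightarrow> 'a)" where
  "walk 0 \<omega> = id"
| "walk (Suc n) \<omega> = \<omega> (Suc n) \<circ> walk n \<omega>"

text \<open>F_n = sigma(X_1,...,X_n).\<close>
definition walk_filtration :: "('a \<Rightarrow> 'a) pmf \<Rightarrow> nat \<Rightarrow> (nat \<Rightarrow> 'a \<Rightarrow> 'a) measure" where
  "walk_filtration \<mu> n = vimage_algebra (space (walk_space \<mu>)) (\<lambda>\<omega>. restrict \<omega> {1..n})
      (PiM {1..n} (\<lambda>_. step_space \<mu>))"

definition mart_incr :: "'a::metric_space \<Rightarrow> (('a \<Rightarrow> real) \<Rightarrow> real) \<Rightarrow> real \<Rightarrow> nat \<Rightarrow> ('a \<Rightarrow> real)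
      \<Rightarrow> (nat \<Rightarrow> 'a \<Rightarrow> 'a) \<Rightarrow> real" where
  "mart_incr o' \<psi> ell n x \<omega> = sigma0 o' \<psi> (\<omega> n) (horo_act o' (walk (n - 1) \<omega>) x) - ell"

definition var_bound :: "'a::metric_space \<Rightarrow> (('a \<Rightarrow> real) \<Rightarrow> real) \<Rightarrow> real \<Rightarrow> ('a \<Rightarrow> 'a) pmf \<Rightarrow> real" where
  "var_bound o' \<psi> ell \<mu> = (SUP \<xi>\<in>horo_cpt o'. measure_pmf.expectation \<mu> (\<lambda>g. (sigma0 o' \<psi> g \<xi> - ell)\<^sup>2))"

end

theory Submission
  imports Defs
begin

text \<open>Conditionally on \<open>\<F>\<^sub>n\<^sub>-\<^sub>1\<close>, the increment \<open>\<Delta>\<^sub>nM\<^sub>x\<close> is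
  \<open>\<sigma>\<^sub>0(X\<^sub>n, y) - ell\<close> with \<open>y = L\<^sub>n\<^sub>-\<^sub>1 x\<close> frozen and \<open>X\<^sub>n\<close> an independent
  \<open>\<mu>\<close>-distributed step. This variable is centred by the choice of \<open>\<psi>\<close>, and it is dominated by
  \<open>d(X\<^sub>n o, o) + const\<close> because horofunctions are 1-Lipschitz and \<open>\<psi>\<close> is bounded.
  Expanding \<open>exp\<close> to second order and paying for the cubic remainder with the exponential
  moment gives \<open>\<bbbE> exp (\<lambda>Y) \<le> 1 + \<lambda>\<^sup>2/2 \<bbbE>Y\<^sup>2 + O(\<bar>\<lambda>\<bar>\<^sup>3)\<close> uniformly in \<open>y\<close>,
  which is at most \<open>exp (\<lambda>\<^sup>2(v + \<epsilon>)/2)\<close> for small \<open>\<bar>\<lambda>\<bar>\<close>.\<close>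

section \<open>Isometries and horofunctions\<close>

lemma isometry_inv: "isometry g \<Longrightarrow> isometry (inv g)"
  unfolding isometry_def
proof safe
  assume b: "bij g" and d: "\<forall>x y. dist (g x) (g y) = dist x y"
  show "bij (inv g)" using b by (simp add: bij_imp_bij_inv)
  fix x y
  have "dist (inv g x) (inv g y) = dist (g (inv g x)) (g (inv g y))" using d by simp
  also have "\<dots> = dist x y" using b by (simp add: bij_is_surj surj_f_inv_f)
  finally show "dist (inv g x) (inv g y) = dist x y" .
qed

lemma isometry_comp: "isometry g \<Longrightarrow> isometry h \<Longrightarrow> isometry (g \<circ> h)"
  unfolding isometry_def by (auto intro: bij_comp)

lemma isometry_id: "isometry id"
  unfolding isometry_def by auto

lemma horo_cpt_abs_le:
  assumes "h \<in> horo_cpt o'"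
  shows "\<bar>h m\<bar> \<le> dist m o'"
proof -
  let ?S = "{h :: 'a \<Rightarrow> real. \<forall>m. \<bar>h m\<bar> \<le> dist m o'}"
  have "closed ?S"
    by (intro closed_Collect_all closed_Collect_le continuous_on_rabs
        continuous_on_product_coordinates continuous_on_const)
  moreover have "range (\<lambda>x m. dist x m - dist x o') \<subseteq> ?S"
    by clarsimp (metis abs_dist_diff_le dist_commute)
  ultimately have "horo_cpt o' \<subseteq> ?S"
    unfolding horo_cpt_def by (rule closure_minimal[rotated])
  then show ?thesis using assms by auto
qed

lemma horo_act_in_horo_cpt:
  assumes g: "isometry g" and h: "h \<in> horo_cpt o'"
  shows "horo_act o' g h \<in> horo_cpt o'"
proof -
  let ?R = "range (\<lambda>x m. dist x m - dist x o')"
  have cont: "continuous_on UNIV (horo_act o' g)"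
    unfolding horo_act_def
    by (intro continuous_on_coordinatewise_then_product continuous_on_diff
        continuous_on_product_coordinates)
  have "horo_act o' g (\<lambda>m. dist z m - dist z o') = (\<lambda>m. dist (g z) m - dist (g z) o')" for z
  proof -
    have "dist z (inv g m) = dist (g z) m" for m
      using g isometry_inv[OF g] unfolding isometry_def
      by (metis bij_inv_eq_iff)
    then show ?thesis unfolding horo_act_def by simp
  qed
  then have "horo_act o' g ` ?R \<subseteq> ?R" by auto
  then have "horo_act o' g ` closure ?R \<subseteq> closure ?R"
    by (intro image_closure_subset continuous_on_subset[OF cont]) (use closure_subset in blast)+
  then show ?thesis using h unfolding horo_cpt_def by auto
qed

lemma busemann_abs_le:
  assumes g: "isometry g" and h: "h \<in> horo_cpt o'"
  shows "\<bar>busemann o' g h\<bar> \<le> dist (g o') o'"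
proof -
  have "\<bar>busemann o' g h\<bar> \<le> dist (inv g o') o'"
    unfolding busemann_def using horo_cpt_abs_le[OF h] .
  also have "\<dots> = dist (g o') o'"
    using g isometry_inv[OF g] unfolding isometry_def by (metis bij_inv_eq_iff dist_commute)
  finally show ?thesis .
qed

lemma sigma0_abs_le:
  assumes g: "isometry g" and h: "h \<in> horo_cpt o'"
    and \<psi>: "\<And>h. h \<in> horo_cpt o' \<Longrightarrow> \<bar>\<psi> h\<bar> \<le> B"
  shows "\<bar>sigma0 o' \<psi> g h - ell\<bar> \<le> dist (g o') o' + (2 * B + \<bar>ell\<bar>)"
  using busemann_abs_le[OF g h] \<psi>[OF horo_act_in_horo_cpt[OF g h]] \<psi>[OF h]
  unfolding sigma0_def by linarith

section \<open>Exponential moments of dominated centred variables\<close>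

lemma power_le_exp:
  fixes x :: real
  assumes "0 \<le> x"
  shows "x ^ k \<le> real k ^ k * exp x"
proof (cases "k = 0")
  case False
  have "x / k \<le> exp (x / k)" using exp_ge_add_one_self[of "x / k"] by linarith
  then have "(x / k) ^ k \<le> exp (x / k) ^ k" using assms by (intro power_mono) auto
  also have "\<dots> = exp x" using False by (simp flip: exp_of_nat_mult)
  finally show ?thesis using False by (simp add: field_simps)
qed (simp add: assms)

lemma exp_le_taylor2:
  fixes t :: real
  shows "exp t \<le> 1 + t + t\<^sup>2 / 2 + \<bar>t\<bar> ^ 3 * exp \<bar>t\<bar> / 6"
proof -
  obtain s where s: "\<bar>s\<bar> \<le> \<bar>t\<bar>" and e: "exp t = (\<Sum>m<3. t ^ m / fact m) + exp s / fact 3 * t ^ 3"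
    using Maclaurin_exp_le[of t 3] by blast
  have "t ^ 3 \<le> \<bar>t\<bar> ^ 3"
    using abs_ge_self[of "t ^ 3"] by (simp add: power_abs)
  then have "exp s * t ^ 3 \<le> exp s * \<bar>t\<bar> ^ 3" by simp
  also have "\<dots> \<le> exp \<bar>t\<bar> * \<bar>t\<bar> ^ 3" using s by (intro mult_right_mono) auto
  finally have "exp s * t ^ 3 \<le> exp \<bar>t\<bar> * \<bar>t\<bar> ^ 3" .
  then show ?thesis using e by (simp add: eval_nat_numeral fact_numeral algebra_simps)
qed

text \<open>The cubic remainder is absorbed by the exponential moment: for \<open>\<bar>\<lambda>\<bar> \<le> \<alpha>/2\<close>
  half of \<open>exp (\<alpha> \<bar>y\<bar>)\<close> pays for \<open>exp \<bar>\<lambda> y\<bar>\<close>, the other half for \<open>\<bar>y\<bar>\<^sup>3\<close>.\<close>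
lemma exp_mult_le_taylor2:
  fixes lam y \<alpha> :: real
  assumes \<alpha>: "\<alpha> > 0" and lam: "\<bar>lam\<bar> \<le> \<alpha> / 2"
  shows "exp (lam * y) \<le> 1 + lam * y + lam\<^sup>2 * y\<^sup>2 / 2 + \<bar>lam\<bar> ^ 3 * (36 / \<alpha> ^ 3) * exp (\<alpha> * \<bar>y\<bar>)"
proof -
  let ?h = "\<alpha> / 2 * \<bar>y\<bar>"
  have "exp \<bar>lam * y\<bar> \<le> exp ?h"
    using mult_right_mono[OF lam, of "\<bar>y\<bar>"] by (simp add: abs_mult)
  moreover have "\<bar>y\<bar> ^ 3 \<le> 216 / \<alpha> ^ 3 * exp ?h"
    using power_le_exp[of ?h 3] \<alpha> by (simp add: field_simps)
  ultimately have cube: "\<bar>y\<bar> ^ 3 * exp \<bar>lam * y\<bar> \<le> 216 / \<alpha> ^ 3 * exp ?h * exp ?h"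
    by (intro mult_mono) (use \<alpha> in auto)
  have "\<bar>lam * y\<bar> ^ 3 * exp \<bar>lam * y\<bar> \<le> \<bar>lam\<bar> ^ 3 * (216 / \<alpha> ^ 3 * exp ?h * exp ?h)"
    using mult_left_mono[OF cube, of "\<bar>lam\<bar> ^ 3"] by (simp add: abs_mult power_mult_distrib)
  also have "\<dots> = 6 * (\<bar>lam\<bar> ^ 3 * (36 / \<alpha> ^ 3) * exp (\<alpha> * \<bar>y\<bar>))"
    by (simp flip: exp_add)
  finally show ?thesis
    using exp_le_taylor2[of "lam * y"] by (simp add: power_mult_distrib)
qed

lemma pmf_moments_dominated:
  fixes Y K :: "'g \<Rightarrow> real"
  assumes \<alpha>: "\<alpha> > 0" and int_exp: "integrable (measure_pmf \<mu>) (\<lambda>g. exp (\<alpha> * K g))"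
    and dom: "\<And>g. g \<in> set_pmf \<mu> \<Longrightarrow> \<bar>Y g\<bar> \<le> K g"
  shows "integrable (measure_pmf \<mu>) Y"
    and "integrable (measure_pmf \<mu>) (\<lambda>g. (Y g)\<^sup>2)"
    and "measure_pmf.expectation \<mu> (\<lambda>g. (Y g)\<^sup>2)
           \<le> 4 / \<alpha>\<^sup>2 * measure_pmf.expectation \<mu> (\<lambda>g. exp (\<alpha> * K g))"
proof -
  have exp_le: "exp (\<alpha> * \<bar>Y g\<bar>) \<le> exp (\<alpha> * K g)" if "g \<in> set_pmf \<mu>" for g
    using dom[OF that] \<alpha> by simp
  have lin: "\<bar>Y g\<bar> \<le> 1 / \<alpha> * exp (\<alpha> * K g)" if "g \<in> set_pmf \<mu>" for g
  proof -
    have "\<alpha> * \<bar>Y g\<bar> \<le> exp (\<alpha> * \<bar>Y g\<bar>)"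
      using power_le_exp[of "\<alpha> * \<bar>Y g\<bar>" 1] \<alpha> by simp
    then have "\<alpha> * \<bar>Y g\<bar> \<le> exp (\<alpha> * K g)" using exp_le[OF that] by linarith
    then show ?thesis using \<alpha> by (simp add: field_simps)
  qed
  have sq: "(Y g)\<^sup>2 \<le> 4 / \<alpha>\<^sup>2 * exp (\<alpha> * K g)" if "g \<in> set_pmf \<mu>" for g
  proof -
    have "(\<alpha> * \<bar>Y g\<bar>)\<^sup>2 \<le> 4 * exp (\<alpha> * \<bar>Y g\<bar>)"
      using power_le_exp[of "\<alpha> * \<bar>Y g\<bar>" 2] \<alpha> by simp
    then have "(\<alpha> * \<bar>Y g\<bar>)\<^sup>2 \<le> 4 * exp (\<alpha> * K g)" using exp_le[OF that] by linarith
    then show ?thesis using \<alpha> by (simp add: field_simps)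
  qed
  show "integrable (measure_pmf \<mu>) Y"
    by (rule Bochner_Integration.integrable_bound[OF integrable_mult_right[where c="1 / \<alpha>", OF int_exp]])
       (use lin \<alpha> in \<open>auto simp: AE_measure_pmf_iff\<close>)
  show int_sq: "integrable (measure_pmf \<mu>) (\<lambda>g. (Y g)\<^sup>2)"
    by (rule Bochner_Integration.integrable_bound[OF integrable_mult_right[where c="4 / \<alpha>\<^sup>2", OF int_exp]])
       (use sq in \<open>auto simp: AE_measure_pmf_iff\<close>)
  have "measure_pmf.expectation \<mu> (\<lambda>g. (Y g)\<^sup>2)
          \<le> measure_pmf.expectation \<mu> (\<lambda>g. 4 / \<alpha>\<^sup>2 * exp (\<alpha> * K g))"
    by (intro integral_mono_AE int_sq integrable_mult_right int_exp)
       (use sq in \<open>auto simp: AE_measure_pmf_iff\<close>)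
  then show "measure_pmf.expectation \<mu> (\<lambda>g. (Y g)\<^sup>2)
               \<le> 4 / \<alpha>\<^sup>2 * measure_pmf.expectation \<mu> (\<lambda>g. exp (\<alpha> * K g))"
    by simp
qed

lemma pmf_mgf_le:
  fixes Y K :: "'g \<Rightarrow> real"
  assumes \<alpha>: "\<alpha> > 0" and int_exp: "integrable (measure_pmf \<mu>) (\<lambda>g. exp (\<alpha> * K g))"
    and dom: "\<And>g. g \<in> set_pmf \<mu> \<Longrightarrow> \<bar>Y g\<bar> \<le> K g"
    and centered: "measure_pmf.expectation \<mu> Y = 0"
    and lam: "\<bar>lam\<bar> \<le> \<alpha> / 2"
  shows "(\<integral>\<^sup>+g. exp (lam * Y g) \<partial>\<mu>)
           \<le> ennreal (1 + lam\<^sup>2 / 2 * measure_pmf.expectation \<mu> (\<lambda>g. (Y g)\<^sup>2)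
                      + \<bar>lam\<bar> ^ 3 * (36 / \<alpha> ^ 3) * measure_pmf.expectation \<mu> (\<lambda>g. exp (\<alpha> * K g)))"
proof -
  note int_Y = pmf_moments_dominated(1,2)[OF \<alpha> int_exp dom]
  define R where "R g = 1 + lam * Y g + lam\<^sup>2 / 2 * (Y g)\<^sup>2 + \<bar>lam\<bar> ^ 3 * (36 / \<alpha> ^ 3) * exp (\<alpha> * K g)"
    for g
  have exp_le_R: "exp (lam * Y g) \<le> R g" if "g \<in> set_pmf \<mu>" for g
  proof -
    have "exp (\<alpha> * \<bar>Y g\<bar>) \<le> exp (\<alpha> * K g)" using dom[OF that] \<alpha> by simp
    then have "\<bar>lam\<bar> ^ 3 * (36 / \<alpha> ^ 3) * exp (\<alpha> * \<bar>Y g\<bar>) \<le> \<bar>lam\<bar> ^ 3 * (36 / \<alpha> ^ 3) * exp (\<alpha> * K g)"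
      using \<alpha> by (intro mult_left_mono) auto
    then show ?thesis
      using exp_mult_le_taylor2[OF \<alpha> lam, of "Y g"] unfolding R_def by (simp add: power_mult_distrib)
  qed
  have int_R: "integrable (measure_pmf \<mu>) R"
    unfolding R_def using int_Y int_exp by simp
  have "(\<integral>\<^sup>+g. exp (lam * Y g) \<partial>\<mu>) \<le> (\<integral>\<^sup>+g. R g \<partial>\<mu>)"
    by (intro nn_integral_mono_AE) (auto simp: AE_measure_pmf_iff intro: exp_le_R ennreal_leI)
  also have "\<dots> = ennreal (measure_pmf.expectation \<mu> R)"
    by (intro nn_integral_eq_integral int_R)
       (auto simp: AE_measure_pmf_iff intro: order_trans[OF exp_ge_zero exp_le_R])
  also have "measure_pmf.expectation \<mu> R
      = 1 + lam\<^sup>2 / 2 * measure_pmf.expectation \<mu> (\<lambda>g. (Y g)\<^sup>2)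
          + \<bar>lam\<bar> ^ 3 * (36 / \<alpha> ^ 3) * measure_pmf.expectation \<mu> (\<lambda>g. exp (\<alpha> * K g))"
    unfolding R_def using int_Y int_exp centered by simp
  finally show ?thesis .
qed

lemma pmf_uniform_subgaussian:
  fixes Y :: "'i \<Rightarrow> 'g \<Rightarrow> real" and K :: "'g \<Rightarrow> real"
  assumes \<alpha>: "\<alpha> > 0" and int_exp: "integrable (measure_pmf \<mu>) (\<lambda>g. exp (\<alpha> * K g))"
    and dom: "\<And>i g. i \<in> I \<Longrightarrow> g \<in> set_pmf \<mu> \<Longrightarrow> \<bar>Y i g\<bar> \<le> K g"
    and centered: "\<And>i. i \<in> I \<Longrightarrow> measure_pmf.expectation \<mu> (Y i) = 0"
    and \<epsilon>: "\<epsilon> > 0"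
  shows "\<exists>b>0. \<forall>lam. \<bar>lam\<bar> < b \<longrightarrow> (\<forall>i\<in>I. (\<integral>\<^sup>+g. exp (lam * Y i g) \<partial>\<mu>)
           \<le> ennreal (exp (lam\<^sup>2 * ((SUP i\<in>I. measure_pmf.expectation \<mu> (\<lambda>g. (Y i g)\<^sup>2)) + \<epsilon>) / 2)))"
proof -
  define E where "E = measure_pmf.expectation \<mu> (\<lambda>g. exp (\<alpha> * K g))"
  define V where "V = (SUP i\<in>I. measure_pmf.expectation \<mu> (\<lambda>g. (Y i g)\<^sup>2))"
  define D where "D = 36 / \<alpha> ^ 3 * E"
  define b where "b = min (\<alpha> / 2) (\<epsilon> / (2 * D + 2))"
  have second_moment_le: "measure_pmf.expectation \<mu> (\<lambda>g. (Y i g)\<^sup>2) \<le> V" if "i \<in> I" for i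
    unfolding V_def
    by (intro cSUP_upper that bdd_aboveI2[where M="4 / \<alpha>\<^sup>2 * E"])
       (use pmf_moments_dominated(3)[OF \<alpha> int_exp dom] in \<open>auto simp: E_def\<close>)
  have "D \<ge> 0" unfolding D_def E_def using \<alpha> by simp
  then have "b > 0" unfolding b_def using \<alpha> \<epsilon> by simp
  moreover have "(\<integral>\<^sup>+g. exp (lam * Y i g) \<partial>\<mu>) \<le> ennreal (exp (lam\<^sup>2 * (V + \<epsilon>) / 2))"
    if lam: "\<bar>lam\<bar> < b" and i: "i \<in> I" for lam i
  proof -
    have "\<bar>lam\<bar> * (2 * D + 2) < \<epsilon>"
      using lam \<open>D \<ge> 0\<close> unfolding b_def by (simp add: field_simps)
    then have "\<bar>lam\<bar> * D \<le> \<epsilon> / 2"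
      using abs_ge_zero[of lam] by (simp add: distrib_left)
    then have "\<bar>lam\<bar> ^ 3 * D \<le> lam\<^sup>2 * (\<epsilon> / 2)"
      using mult_left_mono[of "\<bar>lam\<bar> * D" "\<epsilon> / 2" "lam\<^sup>2"]
      by (simp add: power2_eq_square power3_eq_cube mult.assoc)
    moreover have "lam\<^sup>2 / 2 * measure_pmf.expectation \<mu> (\<lambda>g. (Y i g)\<^sup>2) \<le> lam\<^sup>2 / 2 * V"
      using second_moment_le[OF i] by (intro mult_left_mono) auto
    ultimately have "1 + lam\<^sup>2 / 2 * measure_pmf.expectation \<mu> (\<lambda>g. (Y i g)\<^sup>2) + \<bar>lam\<bar> ^ 3 * (36 / \<alpha> ^ 3) * E
        \<le> exp (lam\<^sup>2 * (V + \<epsilon>) / 2)"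
      using exp_ge_add_one_self[of "lam\<^sup>2 * (V + \<epsilon>) / 2"] unfolding D_def
      by (simp add: field_simps)
    moreover have "\<bar>lam\<bar> \<le> \<alpha> / 2" using lam unfolding b_def by simp
    ultimately show ?thesis
      using pmf_mgf_le[OF \<alpha> int_exp dom[OF i] centered[OF i]] unfolding E_def
      by (meson ennreal_leI order_trans)
  qed
  ultimately show ?thesis unfolding V_def by blast
qed

section \<open>Product measures and conditional expectations\<close>

lemma (in product_prob_space) nn_integral_fresh_coordinate_le:
  assumes J: "finite J" "J \<subseteq> I" and n: "n \<in> I" "n \<notin> J"
    and G_meas: "(\<lambda>r. G (r n) (restrict r J)) \<in> borel_measurable (PiM (insert n J) M)"
    and G_le: "\<And>r. r \<in> space (PiM J M) \<Longrightarrow> (\<integral>\<^sup>+y. G y r \<partial>M n) \<le> c"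
    and A: "A \<in> sets (vimage_algebra (space (PiM I M)) (\<lambda>\<omega>. restrict \<omega> J) (PiM J M))"
  shows "(\<integral>\<^sup>+\<omega>. G (\<omega> n) (restrict \<omega> J) * indicator A \<omega> \<partial>PiM I M) \<le> c * emeasure (PiM I M) A"
proof -
  let ?K = "insert n J"
  have restrict_J: "(\<lambda>\<omega>. restrict \<omega> J) \<in> measurable (PiM I M) (PiM J M)"
    using J(2) by (rule measurable_restrict_subset)
  obtain B where B: "B \<in> sets (PiM J M)" and A_eq: "A = prod_emb I M J B"
    using A measurable_space[OF restrict_J]
    by (auto simp: sets_vimage_algebra2 prod_emb_def space_PiM)
  define H where "H r = G (r n) (restrict r J) * indicator B (restrict r J)" for r
  have H_meas: "H \<in> borel_measurable (PiM ?K M)"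
    unfolding H_def
    by (intro borel_measurable_times_ennreal G_meas
        measurable_compose[OF measurable_restrict_subset borel_measurable_indicator[OF B]]) auto
  have "(\<integral>\<^sup>+\<omega>. G (\<omega> n) (restrict \<omega> J) * indicator A \<omega> \<partial>PiM I M) = (\<integral>\<^sup>+\<omega>. H (restrict \<omega> ?K) \<partial>PiM I M)"
    using n(2) by (intro nn_integral_cong) (auto simp: H_def A_eq prod_emb_iff PiE_iff space_PiM Int_insert_left indicator_def)
  also have "\<dots> = (\<integral>\<^sup>+r. H r \<partial>distr (PiM I M) (PiM ?K M) (\<lambda>\<omega>. restrict \<omega> ?K))"
    by (rule nn_integral_distr[symmetric, OF measurable_restrict_subset]) (use J n H_meas in auto)
  also have "\<dots> = (\<integral>\<^sup>+r. H r \<partial>PiM ?K M)"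
    using J n by (subst distr_PiM_restrict_finite) auto
  also have "\<dots> = (\<integral>\<^sup>+r. (\<integral>\<^sup>+y. H (r(n := y)) \<partial>M n) \<partial>PiM J M)"
    using J n H_meas by (intro product_nn_integral_insert) auto
  also have "\<dots> \<le> (\<integral>\<^sup>+r. c * indicator B r \<partial>PiM J M)"
  proof (intro nn_integral_mono)
    fix r assume r: "r \<in> space (PiM J M)"
    then have "restrict (r(n := y)) J = r" for y
      using n(2) by (auto simp: space_PiM PiE_def extensional_def fun_eq_iff)
    then have "(\<integral>\<^sup>+y. H (r(n := y)) \<partial>M n) = (\<integral>\<^sup>+y. G y r \<partial>M n) * indicator B r"
      unfolding H_def by (cases "r \<in> B") simp_all
    also have "\<dots> \<le> c * indicator B r"
      using G_le[OF r] by (intro mult_right_mono) auto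
    finally show "(\<integral>\<^sup>+y. H (r(n := y)) \<partial>M n) \<le> c * indicator B r" .
  qed
  also have "\<dots> = c * emeasure (PiM J M) B"
    using B by (rule nn_integral_cmult_indicator)
  also have "\<dots> = c * emeasure (PiM I M) A"
    unfolding A_eq using J B by (simp add: emeasure_PiM_emb')
  finally show ?thesis .
qed

lemma (in sigma_finite_subalgebra) AE_real_cond_exp_le_const:
  assumes fin: "finite_measure M" and f: "integrable M f"
    and le: "\<And>A. A \<in> sets F \<Longrightarrow> (\<integral>\<omega>\<in>A. f \<omega> \<partial>M) \<le> c * measure M A"
  shows "AE \<omega> in M. real_cond_exp M F f \<omega> \<le> c"
proof -
  let ?h = "real_cond_exp M F f"
  define A where "A = {\<omega> \<in> space M. c < ?h \<omega>}"
  have "space F = space M" using subalg by (simp add: subalgebra_def)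
  moreover have "{\<omega> \<in> space F. c < ?h \<omega>} \<in> sets F" by measurable
  ultimately have A_F: "A \<in> sets F" unfolding A_def by simp
  then have A_M: "A \<in> sets M" using subalg by (auto simp: subalgebra_def)
  have "integrable M (\<lambda>\<omega>. ?h \<omega> - c)"
    using real_cond_exp_int(1)[OF f] finite_measure.integrable_const[OF fin]
    by (rule Bochner_Integration.integrable_diff)
  from integrable_mult_indicator[OF A_M this]
  have int_h: "integrable M (\<lambda>\<omega>. indicator A \<omega> * (?h \<omega> - c))" by simp
  have "(\<integral>\<omega>. indicator A \<omega> * (?h \<omega> - c) \<partial>M) = (\<integral>\<omega>\<in>A. f \<omega> \<partial>M) - c * measure M A"
  proof -
    have "integrable M (\<lambda>\<omega>. indicator A \<omega> * ?h \<omega>)"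
      using integrable_mult_indicator[OF A_M real_cond_exp_int(1)[OF f]] by simp
    moreover have "integrable M (\<lambda>\<omega>. c * indicator A \<omega> :: real)"
      using A_M finite_measure.emeasure_finite[OF fin, of A]
      by (simp add: integrable_real_indicator top.not_eq_extremum)
    ultimately show ?thesis
      using real_cond_exp_intA[OF f A_F] A_M
      by (simp add: set_lebesgue_integral_def algebra_simps)
  qed
  also have "\<dots> \<le> 0" using le[OF A_F] by simp
  moreover have nonneg: "AE \<omega> in M. 0 \<le> indicator A \<omega> * (?h \<omega> - c)"
    by (intro AE_I2) (simp add: A_def indicator_def)
  ultimately have "(\<integral>\<omega>. indicator A \<omega> * (?h \<omega> - c) \<partial>M) = 0"
    using integral_nonneg_AE[OF nonneg] by linarith
  then have "AE \<omega> in M. indicator A \<omega> * (?h \<omega> - c) = 0"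
    using integral_nonneg_eq_0_iff_AE[OF int_h nonneg] by simp
  then show ?thesis
    by (rule AE_mp) (intro AE_I2, auto simp: A_def indicator_def split: if_splits)
qed

lemma (in finite_measure) set_integral_le_of_nn_integral_le:
  assumes A: "A \<in> sets M" and f: "f \<in> borel_measurable M" "\<And>\<omega>. 0 \<le> f \<omega>" and c: "0 \<le> c"
    and le: "(\<integral>\<^sup>+\<omega>. ennreal (f \<omega>) * indicator A \<omega> \<partial>M) \<le> c * emeasure M A"
  shows "(\<integral>\<omega>\<in>A. f \<omega> \<partial>M) \<le> c * measure M A"
proof -
  have "(\<integral>\<omega>\<in>A. f \<omega> \<partial>M) = enn2real (\<integral>\<^sup>+\<omega>. ennreal (f \<omega>) * indicator A \<omega> \<partial>M)"
    unfolding set_lebesgue_integral_def using A f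
    by (subst integral_eq_nn_integral) (auto intro!: arg_cong[where f=enn2real] nn_integral_cong
        simp: indicator_def)
  also have "\<dots> \<le> enn2real (c * emeasure M A)"
    using le c by (intro enn2real_mono) (auto simp: emeasure_eq_measure simp flip: ennreal_mult)
  also have "\<dots> = c * measure M A"
    using c by (simp add: emeasure_eq_measure flip: ennreal_mult)
  finally show ?thesis .
qed

section \<open>The random walk\<close>

lemma space_step_space: "space (step_space \<mu>) = set_pmf \<mu>"
  unfolding step_space_def by (simp add: space_restrict_space)

lemma sets_step_space: "sets (step_space \<mu>) = sets (count_space (set_pmf \<mu>))"
  unfolding step_space_def by (auto simp: sets_restrict_space)

lemma nn_integral_step_space: "(\<integral>\<^sup>+g. f g \<partial>step_space \<mu>) = (\<integral>\<^sup>+g. f g \<partial>measure_pmf \<mu>)"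
  unfolding step_space_def
  by (subst nn_integral_restrict_space) (auto intro!: nn_integral_cong_AE simp: AE_measure_pmf_iff)

lemma product_prob_space_step_space: "product_prob_space (\<lambda>_. step_space \<mu>)"
proof -
  have "prob_space (step_space \<mu>)"
    unfolding step_space_def
    by (intro prob_space_restrict_space measure_pmf.emeasure_eq_1_AE) (auto simp: AE_measure_pmf_iff)
  then show ?thesis
    by (auto simp: product_prob_space_def product_prob_space_axioms_def product_sigma_finite_def
        prob_space_imp_sigma_finite)
qed

lemma measurable_coordinate_step_space:
  "n \<in> I \<Longrightarrow> (\<lambda>\<omega>. \<omega> n) \<in> measurable (PiM I (\<lambda>_. step_space \<mu>)) (count_space (set_pmf \<mu>))"
  by (subst measurable_cong_sets[OF refl sets_step_space[symmetric]])
     (rule measurable_component_singleton)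

lemma walk_cong: "(\<And>i. 1 \<le> i \<Longrightarrow> i \<le> k \<Longrightarrow> \<omega> i = \<omega>' i) \<Longrightarrow> walk k \<omega> = walk k \<omega>'"
  by (induction k) auto

lemma isometry_walk: "(\<And>i. 1 \<le> i \<Longrightarrow> i \<le> k \<Longrightarrow> isometry (\<omega> i)) \<Longrightarrow> isometry (walk k \<omega>)"
  by (induction k) (auto simp: isometry_id isometry_comp)

text \<open>The steps take only countably many values, so any function of finitely many of them
  is measurable.\<close>
lemma measurable_walk:
  fixes \<Phi> :: "('b \<Rightarrow> 'b) \<Rightarrow> 'c::topological_space"
  assumes "{1..k} \<subseteq> I"
  shows "(\<lambda>\<omega>. \<Phi> (walk k \<omega>)) \<in> borel_measurable (PiM I (\<lambda>_. step_space \<mu>))"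
  using assms
proof (induction k arbitrary: \<Phi>)
  case (Suc k)
  have "(\<lambda>\<omega>. (\<lambda>g \<omega>. \<Phi> (g \<circ> walk k \<omega>)) (\<omega> (Suc k)) \<omega>) \<in> borel_measurable (PiM I (\<lambda>_. step_space \<mu>))"
    using Suc by (intro measurable_compose_countable'[OF Suc.IH measurable_coordinate_step_space]) auto
  then show ?case by (simp only: walk.simps)
qed simp

lemma measurable_step_walk:
  fixes \<Psi> :: "('b \<Rightarrow> 'b) \<Rightarrow> ('b \<Rightarrow> 'b) \<Rightarrow> 'c::topological_space"
  assumes "{1..k} \<subseteq> I" "n \<in> I"
  shows "(\<lambda>\<omega>. \<Psi> (\<omega> n) (walk k \<omega>)) \<in> borel_measurable (PiM I (\<lambda>_. step_space \<mu>))"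
  using assms
  by (intro measurable_compose_countable'[OF measurable_walk measurable_coordinate_step_space]) auto

lemma subalgebra_walk_filtration: "subalgebra (walk_space \<mu>) (walk_filtration \<mu> k)"
proof -
  have restrict: "(\<lambda>\<omega>. restrict \<omega> {1..k}) \<in> measurable (walk_space \<mu>) (PiM {1..k} (\<lambda>_. step_space \<mu>))"
    unfolding walk_space_def by (rule measurable_restrict_subset) auto
  have "sets (walk_filtration \<mu> k)
      = {(\<lambda>\<omega>. restrict \<omega> {1..k}) -` B \<inter> space (walk_space \<mu>) | B. B \<in> sets (PiM {1..k} (\<lambda>_. step_space \<mu>))}"
    unfolding walk_filtration_def using measurable_space[OF restrict] by (intro sets_vimage_algebra2) auto
  then show ?thesis
    unfolding subalgebra_def using measurable_sets[OF restrict] by (auto simp: walk_filtration_def)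
qed

lemma prob_space_walk_space: "prob_space (walk_space \<mu>)"
proof -
  interpret W: product_prob_space "\<lambda>_. step_space \<mu>" UNIV
    by (rule product_prob_space_step_space)
  show ?thesis unfolding walk_space_def by (rule W.prob_space_axioms)
qed

text \<open>The step \<open>X\<^sub>n\<close> is independent of \<open>\<F>\<^sub>n\<^sub>-\<^sub>1\<close>, while \<open>L\<^sub>n\<^sub>-\<^sub>1\<close> is
  \<open>\<F>\<^sub>n\<^sub>-\<^sub>1\<close>-measurable.\<close>
lemma walk_nn_integral_le:
  fixes \<Phi> :: "('b \<Rightarrow> 'b) \<Rightarrow> ('b \<Rightarrow> 'b) \<Rightarrow> real"
  assumes n: "1 \<le> n"
    and \<Phi>_le: "\<And>\<omega>. (\<And>i. 1 \<le> i \<Longrightarrow> i < n \<Longrightarrow> \<omega> i \<in> set_pmf \<mu>)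
                  \<Longrightarrow> (\<integral>\<^sup>+g. \<Phi> g (walk (n - 1) \<omega>) \<partial>\<mu>) \<le> c"
    and A: "A \<in> sets (walk_filtration \<mu> (n - 1))"
  shows "(\<integral>\<^sup>+\<omega>. ennreal (\<Phi> (\<omega> n) (walk (n - 1) \<omega>)) * indicator A \<omega> \<partial>walk_space \<mu>)
           \<le> c * emeasure (walk_space \<mu>) A"
proof -
  interpret product_prob_space "\<lambda>_. step_space \<mu>" UNIV
    by (rule product_prob_space_step_space)
  define J where "J = {1..n - 1}"
  have J: "finite J" "n \<notin> J" "insert n J = {1..n}"
    using n by (auto simp: J_def)
  have walk_restrict: "walk (n - 1) (restrict \<omega> J) = walk (n - 1) \<omega>" for \<omega> :: "nat \<Rightarrow> 'b \<Rightarrow> 'b"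
    by (rule walk_cong) (auto simp: J_def)
  have "(\<integral>\<^sup>+\<omega>. ennreal (\<Phi> (\<omega> n) (walk (n - 1) (restrict \<omega> J))) * indicator A \<omega> \<partial>PiM UNIV (\<lambda>_. step_space \<mu>))
          \<le> c * emeasure (PiM UNIV (\<lambda>_. step_space \<mu>)) A"
  proof (rule nn_integral_fresh_coordinate_le[where G="\<lambda>y r. ennreal (\<Phi> y (walk (n - 1) r))"])
    show "(\<lambda>r. ennreal (\<Phi> (r n) (walk (n - 1) (restrict r J))))
            \<in> borel_measurable (PiM (insert n J) (\<lambda>_. step_space \<mu>))"
      unfolding walk_restrict J(3) by (rule measurable_step_walk) (use n in auto)
    show "(\<integral>\<^sup>+y. ennreal (\<Phi> y (walk (n - 1) r)) \<partial>step_space \<mu>) \<le> c"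
      if "r \<in> space (PiM J (\<lambda>_. step_space \<mu>))" for r
      unfolding nn_integral_step_space using that
      by (intro \<Phi>_le) (auto simp: J_def space_PiM space_step_space)
    show "A \<in> sets (vimage_algebra (space (PiM UNIV (\<lambda>_. step_space \<mu>))) (\<lambda>\<omega>. restrict \<omega> J)
                      (PiM J (\<lambda>_. step_space \<mu>)))"
      using A unfolding walk_filtration_def walk_space_def J_def .
  qed (use J in auto)
  then show ?thesis unfolding walk_restrict walk_space_def .
qed

lemma walk_cond_exp_le:
  fixes \<Phi> :: "('b \<Rightarrow> 'b) \<Rightarrow> ('b \<Rightarrow> 'b) \<Rightarrow> real"
  assumes n: "1 \<le> n" and c: "0 \<le> c" and \<Phi>_nonneg: "\<And>g w. 0 \<le> \<Phi> g w"
    and \<Phi>_le: "\<And>\<omega>. (\<And>i. 1 \<le> i \<Longrightarrow> i < n \<Longrightarrow> \<omega> i \<in> set_pmf \<mu>)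
                  \<Longrightarrow> (\<integral>\<^sup>+g. \<Phi> g (walk (n - 1) \<omega>) \<partial>\<mu>) \<le> ennreal c"
  shows "AE \<omega> in walk_space \<mu>. real_cond_exp (walk_space \<mu>) (walk_filtration \<mu> (n - 1))
           (\<lambda>\<omega>. \<Phi> (\<omega> n) (walk (n - 1) \<omega>)) \<omega> \<le> c"
proof -
  let ?M = "walk_space \<mu>" and ?F = "walk_filtration \<mu> (n - 1)"
  let ?f = "\<lambda>\<omega>. \<Phi> (\<omega> n) (walk (n - 1) \<omega>)"
  interpret prob_space ?M by (rule prob_space_walk_space)
  have sub: "subalgebra ?M ?F" by (rule subalgebra_walk_filtration)
  then have space_F: "space ?F = space ?M" unfolding subalgebra_def by blast
  interpret sigma_finite_subalgebra ?M ?F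
    using sub by (intro finite_measure_subalgebra_is_sigma_finite)
                 (simp add: finite_measure_subalgebra_def finite_measure_subalgebra_axioms_def
                   finite_measure_axioms)
  have f_meas: "?f \<in> borel_measurable ?M"
    unfolding walk_space_def by (rule measurable_step_walk) auto
  have f_le: "(\<integral>\<^sup>+\<omega>. ennreal (?f \<omega>) * indicator A \<omega> \<partial>?M) \<le> ennreal c * emeasure ?M A"
    if "A \<in> sets ?F" for A
    by (rule walk_nn_integral_le[OF n _ that]) (fact \<Phi>_le)
  have "(\<integral>\<^sup>+\<omega>. ennreal (?f \<omega>) \<partial>?M) = (\<integral>\<^sup>+\<omega>. ennreal (?f \<omega>) * indicator (space ?M) \<omega> \<partial>?M)"
    by (intro nn_integral_cong) simp
  also have "\<dots> \<le> ennreal c * emeasure ?M (space ?M)"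
    using sets.top[of ?F] unfolding space_F by (rule f_le)
  also have "\<dots> < \<infinity>" by (simp add: emeasure_space_1)
  finally have "integrable ?M ?f"
    using \<Phi>_nonneg f_meas by (intro integrableI_nonneg) auto
  moreover have "(\<integral>\<omega>\<in>A. ?f \<omega> \<partial>?M) \<le> c * measure ?M A" if "A \<in> sets ?F" for A
    using that sub \<Phi>_nonneg c f_meas f_le[OF that]
    by (intro set_integral_le_of_nn_integral_le) (auto simp: subalgebra_def)
  ultimately show ?thesis
    by (intro AE_real_cond_exp_le_const finite_measure_axioms)
qed

section \<open>Conditional moment generating function of the increments\<close>

lemma sigma0_subgaussian:
  fixes o' :: "'a::metric_space"
  assumes iso: "set_pmf \<mu> \<subseteq> {g. isometry g}"
    and moment: "finite_exp_moment o' \<mu>"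
    and bounded: "bounded (\<psi> ` horo_cpt o')"
    and mean: "\<forall>x\<in>horo_cpt o'. measure_pmf.expectation \<mu> (\<lambda>g. sigma0 o' \<psi> g x) = ell"
    and \<epsilon>: "\<epsilon> > 0"
  shows "\<exists>b>0. \<forall>lam. \<bar>lam\<bar> < b \<longrightarrow> (\<forall>y\<in>horo_cpt o'.
           (\<integral>\<^sup>+g. exp (lam * (sigma0 o' \<psi> g y - ell)) \<partial>\<mu>)
             \<le> ennreal (exp (lam\<^sup>2 * (var_bound o' \<psi> ell \<mu> + \<epsilon>) / 2)))"
proof -
  obtain \<alpha> where \<alpha>: "\<alpha> > 0" and int_dist: "integrable \<mu> (\<lambda>g. exp (\<alpha> * dist (g o') o'))"
    using moment unfolding finite_exp_moment_def by blast
  obtain B where B: "\<And>h. h \<in> horo_cpt o' \<Longrightarrow> \<bar>\<psi> h\<bar> \<le> B"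
    using bounded unfolding bounded_iff by auto
  define K where "K g = dist (g o') o' + (2 * B + \<bar>ell\<bar>)" for g :: "'a \<Rightarrow> 'a"
  have int_K: "integrable \<mu> (\<lambda>g. exp (\<alpha> * K g))"
    using int_dist unfolding K_def by (simp add: distrib_left exp_add)
  have dom: "\<bar>sigma0 o' \<psi> g y - ell\<bar> \<le> K g" if "y \<in> horo_cpt o'" "g \<in> set_pmf \<mu>" for y g
    unfolding K_def using iso that B by (intro sigma0_abs_le) auto
  have centered: "measure_pmf.expectation \<mu> (\<lambda>g. sigma0 o' \<psi> g y - ell) = 0" if y: "y \<in> horo_cpt o'" for y
  proof -
    have "integrable \<mu> (\<lambda>g. sigma0 o' \<psi> g y - ell)"
      using dom[OF y] by (rule pmf_moments_dominated(1)[OF \<alpha> int_K])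
    then have "integrable \<mu> (\<lambda>g. (sigma0 o' \<psi> g y - ell) + ell)"
      by (intro Bochner_Integration.integrable_add measure_pmf.integrable_const)
    then have "integrable \<mu> (\<lambda>g. sigma0 o' \<psi> g y)" by simp
    then show ?thesis using mean y by simp
  qed
  show ?thesis
    unfolding var_bound_def by (rule pmf_uniform_subgaussian[OF \<alpha> int_K dom centered \<epsilon>])
qed

lemma mart_incr_cond_exp_le:
  fixes o' :: "'a::metric_space"
  assumes iso: "set_pmf \<mu> \<subseteq> {g. isometry g}"
    and moment: "finite_exp_moment o' \<mu>"
    and bounded: "bounded (\<psi> ` horo_cpt o')"
    and mean: "\<forall>x\<in>horo_cpt o'. measure_pmf.expectation \<mu> (\<lambda>g. sigma0 o' \<psi> g x) = ell"
    and \<epsilon>: "\<epsilon> > 0"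
  shows "\<exists>b>0. \<forall>lam. \<bar>lam\<bar> < b \<longrightarrow> (\<forall>n\<ge>1. \<forall>x\<in>horo_cpt o'.
           AE \<omega> in walk_space \<mu>.
             real_cond_exp (walk_space \<mu>) (walk_filtration \<mu> (n - 1))
               (\<lambda>\<omega>. exp (lam * mart_incr o' \<psi> ell n x \<omega>)) \<omega>
             \<le> exp (lam\<^sup>2 * (var_bound o' \<psi> ell \<mu> + \<epsilon>) / 2))"
proof -
  obtain b where "b > 0" and mgf: "\<forall>lam. \<bar>lam\<bar> < b \<longrightarrow> (\<forall>y\<in>horo_cpt o'.
      (\<integral>\<^sup>+g. exp (lam * (sigma0 o' \<psi> g y - ell)) \<partial>\<mu>)
        \<le> ennreal (exp (lam\<^sup>2 * (var_bound o' \<psi> ell \<mu> + \<epsilon>) / 2)))"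
    using sigma0_subgaussian[OF iso moment bounded mean \<epsilon>] by blast
  have "AE \<omega> in walk_space \<mu>.
          real_cond_exp (walk_space \<mu>) (walk_filtration \<mu> (n - 1))
            (\<lambda>\<omega>. exp (lam * mart_incr o' \<psi> ell n x \<omega>)) \<omega>
          \<le> exp (lam\<^sup>2 * (var_bound o' \<psi> ell \<mu> + \<epsilon>) / 2)"
    if lam: "\<bar>lam\<bar> < b" and n: "1 \<le> n" and x: "x \<in> horo_cpt o'" for lam n x
  proof -
    have mgf_walk: "(\<integral>\<^sup>+g. exp (lam * (sigma0 o' \<psi> g (horo_act o' (walk (n - 1) \<omega>) x) - ell)) \<partial>\<mu>)
            \<le> ennreal (exp (lam\<^sup>2 * (var_bound o' \<psi> ell \<mu> + \<epsilon>) / 2))"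
      if steps: "\<And>i. 1 \<le> i \<Longrightarrow> i < n \<Longrightarrow> \<omega> i \<in> set_pmf \<mu>" for \<omega>
    proof -
      have "isometry (walk (n - 1) \<omega>)"
        using steps iso n by (intro isometry_walk) (auto simp: subset_eq)
      then have "horo_act o' (walk (n - 1) \<omega>) x \<in> horo_cpt o'"
        using x by (rule horo_act_in_horo_cpt)
      then show ?thesis using mgf lam by blast
    qed
    show ?thesis
      unfolding mart_incr_def
      by (rule walk_cond_exp_le[where \<Phi>="\<lambda>g w. exp (lam * (sigma0 o' \<psi> g (horo_act o' w x) - ell))", OF n])
         (simp, simp, fact mgf_walk)
  qed
  with \<open>b > 0\<close> show ?thesis by blast
qed

theorem lemma4p5:
  fixes o' :: "'a::metric_space"
    and \<mu> :: "('a \<Rightarrow> 'a) pmf"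
    and \<psi> :: "('a \<Rightarrow> real) \<Rightarrow> real"
    and ell :: real
  assumes "separable_space TYPE('a)"
    and "geodesic_space TYPE('a)"
    and "gromov_hyperbolic o'"
    and "set_pmf \<mu> \<subseteq> {g. isometry g}"
    and "non_elementary o' \<mu>"
    and "finite_exp_moment o' \<mu>"
    and "AE \<omega> in walk_space \<mu>. (\<lambda>n. dist (walk n \<omega> o') o' / real n) \<longlonglongrightarrow> ell"
    and "bounded (\<psi> ` horo_cpt o')"
    and "\<psi> \<in> borel_measurable (restrict_space borel (horo_cpt o'))"
    and "\<forall>x\<in>horo_cpt o'. measure_pmf.expectation \<mu> (\<lambda>g. sigma0 o' \<psi> g x) = ell"
  shows "\<forall>\<epsilon>>0. \<exists>b>0. \<forall>lam. \<bar>lam\<bar> < b \<longrightarrow> (\<forall>n\<ge>1. \<forall>x\<in>horo_cpt o'.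
      AE \<omega> in walk_space \<mu>.
        real_cond_exp (walk_space \<mu>) (walk_filtration \<mu> (n - 1))
          (\<lambda>\<omega>. exp (lam * mart_incr o' \<psi> ell n x \<omega>)) \<omega>
        \<le> exp (lam\<^sup>2 * (var_bound o' \<psi> ell \<mu> + \<epsilon>) / 2))"
  using mart_incr_cond_exp_le[OF assms(4,6,8,10)] by blast

end
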